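(* For any linguistically well-formed {\bf MLL1} sequent $\vdash\Gamma$, its $\eta$-reduced and $\eta$-long translations are $\alpha\eta$-equivalent: $||\vdash\Gamma||_{\eta\to}\equiv_{\alpha\eta}||\vdash\Gamma||$.
   Context: {\bf MLL1} formulas are built from atoms $p(x_1,\ldots,x_n)$ by $\otimes$, par $\wp$, $\forall$, $\exists$. Each predicate symbol has a valency $(k,n-k)$ marking the first $k$ argument occurrences as left and the rest as right (polarity inherited in compound formulas); a sequent is linguistically well-formed if every quantifier binds exactly one left and one right occurrence and each free variable has exactly one left and one right free occurrence. Predicate symbols are identified with {\bf ETTC} literals of the same valencies. $\eta$-long translation: each variable $x$ gives two indices $x^l,x^r$; $||p(x_1,\ldots,x_n)||_{\eta\to}=p^{x^l_1\ldots x^l_k}_{x^r_{k+1}\ldots x^r_n}$, $\otimes,\wp$ and contexts translated homomorphically, $||\forall xA||_{\eta\to}=\nabla^{x^r}_{x^l}||A||_{\eta\to}$, $||\exists xA||_{\eta\to}=\triangle^{x^r}_{x^l}||A||_{\eta\to}$, $||\vdash\Gamma||_{\eta\to}=(\vdash\pi(\Gamma)::||\Gamma||_{\eta\to})$ with $\pi(\Gamma)=\prod_{x\in FV(\Gamma)}\delta^{x^r}_{x^l}$, $\delta^j_i=[\epsilon]^j_i$. $\eta$-reduced translation (defined up to $\alpha$-equivalence): variables are indices, left occurrences upper and right lower, $||p(x_1,\ldots,x_n)||=p^{x_1\ldots x_k}_{x_{k+1}\ldots x_n}$, $\otimes,\wp$ homomorphic, $||\forall xA||=\nabla^u_v||A||^{[v/x]}_{[u/x]}$,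 $||\exists xA||=\triangle^u_v||A||^{[v/x]}_{[u/x]}$ for suitable indices $u,v$, $||\vdash\Gamma||=(\vdash||\Gamma||)$ (term $1$). $\alpha$-equivalence of tensor sequents: renaming bound indices and consistently renaming free indices; $\eta$-equivalence: generated by $t::\Gamma\to_\eta\delta^i_jt::\Gamma^{[j/i]}$ and $t::\Gamma\to_\eta\delta^j_it::\Gamma_{[j/i]}$ ($j$ fresh) when $i$ has both a free upper and a free lower occurrence in $\Gamma$. *)

theory Defs
  imports Main "HOL-Library.Multiset"
begin

section \<open>MLL1 formulas\<close>

type_synonym var = nat
type_synonym idx = nat

text \<open>Predicate symbols of type 'p; a valency function val p = (k, n-k):
 the first k argument occurrences are left, the remaining ones right.\<close>

datatype 'p fm =
    Atom 'p "var list"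
  | Tensor "'p fm" "'p fm"
  | Par "'p fm" "'p fm"
  | All var "'p fm"
  | Ex var "'p fm"

fun arity_ok :: "('p \<Rightarrow> nat \<times> nat) \<Rightarrow> 'p fm \<Rightarrow> bool" where
  "arity_ok val (Atom p xs) = (length xs = fst (val p) + snd (val p))"
| "arity_ok val (Tensor A B) = (arity_ok val A \<and> arity_ok val B)"
| "arity_ok val (Par A B) = (arity_ok val A \<and> arity_ok val B)"
| "arity_ok val (All x A) = arity_ok val A"
| "arity_ok val (Ex x A) = arity_ok val A"

fun lfree :: "('p \<Rightarrow> nat \<times> nat) \<Rightarrow> var \<Rightarrow> 'p fm \<Rightarrow> nat" where
  "lfree val x (Atom p xs) = count (mset (take (fst (val p)) xs)) x"
| "lfree val x (Tensor A B) = lfree val x A + lfree val x B"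
| "lfree val x (Par A B) = lfree val x A + lfree val x B"
| "lfree val x (All y A) = (if y = x then 0 else lfree val x A)"
| "lfree val x (Ex y A) = (if y = x then 0 else lfree val x A)"

fun rfree :: "('p \<Rightarrow> nat \<times> nat) \<Rightarrow> var \<Rightarrow> 'p fm \<Rightarrow> nat" where
  "rfree val x (Atom p xs) = count (mset (drop (fst (val p)) xs)) x"
| "rfree val x (Tensor A B) = rfree val x A + rfree val x B"
| "rfree val x (Par A B) = rfree val x A + rfree val x B"
| "rfree val x (All y A) = (if y = x then 0 else rfree val x A)"
| "rfree val x (Ex y A) = (if y = x then 0 else rfree val x A)"

fun quant_ok :: "('p \<Rightarrow> nat \<times> nat) \<Rightarrow> 'p fm \<Rightarrow> bool" where
  "quant_ok val (Atom p xs) = True"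
| "quant_ok val (Tensor A B) = (quant_ok val A \<and> quant_ok val B)"
| "quant_ok val (Par A B) = (quant_ok val A \<and> quant_ok val B)"
| "quant_ok val (All x A) = (lfree val x A = 1 \<and> rfree val x A = 1 \<and> quant_ok val A)"
| "quant_ok val (Ex x A) = (lfree val x A = 1 \<and> rfree val x A = 1 \<and> quant_ok val A)"

definition lfree_seq :: "('p \<Rightarrow> nat \<times> nat) \<Rightarrow> var \<Rightarrow> 'p fm list \<Rightarrow> nat" where
  "lfree_seq val x \<Gamma> = sum_list (map (lfree val x) \<Gamma>)"

definition rfree_seq :: "('p \<Rightarrow> nat \<times> nat) \<Rightarrow> var \<Rightarrow> 'p fm list \<Rightarrow> nat" where
  "rfree_seq val x \<Gamma> = sum_list (map (rfree val x) \<Gamma>)"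

definition FV_seq :: "('p \<Rightarrow> nat \<times> nat) \<Rightarrow> 'p fm list \<Rightarrow> var set" where
  "FV_seq val \<Gamma> = {x. lfree_seq val x \<Gamma> + rfree_seq val x \<Gamma> > 0}"

definition ling_wf :: "('p \<Rightarrow> nat \<times> nat) \<Rightarrow> 'p fm list \<Rightarrow> bool" where
  "ling_wf val \<Gamma> \<longleftrightarrow>
     (\<forall>A\<in>set \<Gamma>. arity_ok val A \<and> quant_ok val A) \<and>
     (\<forall>x\<in>FV_seq val \<Gamma>. lfree_seq val x \<Gamma> = 1 \<and> rfree_seq val x \<Gamma> = 1)"

section \<open>ETTC tensor formulas and sequents\<close>

text \<open>TLit p us ls is the literal p with upper indices us and lower indices ls.
  Nabla u v A is nabla with upper index u and lower index v (binding the lower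
  occurrence of u and the upper occurrence of v in A); Tri likewise for triangle.\<close>

datatype 'p tf =
    TLit 'p "idx list" "idx list"
  | TTensor "'p tf" "'p tf"
  | TPar "'p tf" "'p tf"
  | Nabla idx idx "'p tf"
  | Tri idx idx "'p tf"

text \<open>Tensor terms (products of Kronecker deltas): a multiset of pairs (j, i)
  standing for delta^j_i (upper j, lower i); the empty multiset is the term 1.\<close>
type_synonym tm = "(idx \<times> idx) multiset"

definition delta :: "idx \<Rightarrow> idx \<Rightarrow> tm" where
  "delta j i = {#(j, i)#}"

type_synonym 'p tseq = "tm \<times> 'p tf list"

fun idxs :: "'p tf \<Rightarrow> idx set" where
  "idxs (TLit p us ls) = set us \<union> set ls"
| "idxs (TTensor A B) = idxs A \<union> idxs B"
| "idxs (TPar A B) = idxs A \<union> idxs B"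
| "idxs (Nabla u v A) = {u, v} \<union> idxs A"
| "idxs (Tri u v A) = {u, v} \<union> idxs A"

definition seq_idxs :: "'p tseq \<Rightarrow> idx set" where
  "seq_idxs S = (\<Union>(j, i)\<in>set_mset (fst S). {j, i}) \<union> (\<Union>A\<in>set (snd S). idxs A)"

fun subst_up :: "idx \<Rightarrow> idx \<Rightarrow> 'p tf \<Rightarrow> 'p tf" where
  "subst_up j i (TLit p us ls) = TLit p (map (\<lambda>a. if a = i then j else a) us) ls"
| "subst_up j i (TTensor A B) = TTensor (subst_up j i A) (subst_up j i B)"
| "subst_up j i (TPar A B) = TPar (subst_up j i A) (subst_up j i B)"
| "subst_up j i (Nabla u v A) = (if i = v then Nabla u v A else Nabla u v (subst_up j i A))"
| "subst_up j i (Tri u v A) = (if i = v then Tri u v A else Tri u v (subst_up j i A))"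

fun subst_lo :: "idx \<Rightarrow> idx \<Rightarrow> 'p tf \<Rightarrow> 'p tf" where
  "subst_lo j i (TLit p us ls) = TLit p us (map (\<lambda>a. if a = i then j else a) ls)"
| "subst_lo j i (TTensor A B) = TTensor (subst_lo j i A) (subst_lo j i B)"
| "subst_lo j i (TPar A B) = TPar (subst_lo j i A) (subst_lo j i B)"
| "subst_lo j i (Nabla u v A) = (if i = u then Nabla u v A else Nabla u v (subst_lo j i A))"
| "subst_lo j i (Tri u v A) = (if i = u then Tri u v A else Tri u v (subst_lo j i A))"

fun free_up :: "idx \<Rightarrow> 'p tf \<Rightarrow> bool" where
  "free_up i (TLit p us ls) = (i \<in> set us)"
| "free_up i (TTensor A B) = (free_up i A \<or> free_up i B)"
| "free_up i (TPar A B) = (free_up i A \<or> free_up i B)"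
| "free_up i (Nabla u v A) = (i \<noteq> v \<and> free_up i A)"
| "free_up i (Tri u v A) = (i \<noteq> v \<and> free_up i A)"

fun free_lo :: "idx \<Rightarrow> 'p tf \<Rightarrow> bool" where
  "free_lo i (TLit p us ls) = (i \<in> set ls)"
| "free_lo i (TTensor A B) = (free_lo i A \<or> free_lo i B)"
| "free_lo i (TPar A B) = (free_lo i A \<or> free_lo i B)"
| "free_lo i (Nabla u v A) = (i \<noteq> u \<and> free_lo i A)"
| "free_lo i (Tri u v A) = (i \<noteq> u \<and> free_lo i A)"

fun ren :: "(idx \<Rightarrow> idx) \<Rightarrow> 'p tf \<Rightarrow> 'p tf" where
  "ren f (TLit p us ls) = TLit p (map f us) (map f ls)"
| "ren f (TTensor A B) = TTensor (ren f A) (ren f B)"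
| "ren f (TPar A B) = TPar (ren f A) (ren f B)"
| "ren f (Nabla u v A) = Nabla (f u) (f v) (ren f A)"
| "ren f (Tri u v A) = Tri (f u) (f v) (ren f A)"

inductive alpha1 :: "'p tf \<Rightarrow> 'p tf \<Rightarrow> bool" where
  nabla: "u' \<notin> idxs A \<Longrightarrow> v' \<notin> idxs A \<Longrightarrow> u' \<noteq> v' \<Longrightarrow>
     alpha1 (Nabla u v A) (Nabla u' v' (subst_lo u' u (subst_up v' v A)))"
| tri: "u' \<notin> idxs A \<Longrightarrow> v' \<notin> idxs A \<Longrightarrow> u' \<noteq> v' \<Longrightarrow>
     alpha1 (Tri u v A) (Tri u' v' (subst_lo u' u (subst_up v' v A)))"
| tensorL: "alpha1 A A' \<Longrightarrow> alpha1 (TTensor A B) (TTensor A' B)"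
| tensorR: "alpha1 B B' \<Longrightarrow> alpha1 (TTensor A B) (TTensor A B')"
| parL: "alpha1 A A' \<Longrightarrow> alpha1 (TPar A B) (TPar A' B)"
| parR: "alpha1 B B' \<Longrightarrow> alpha1 (TPar A B) (TPar A B')"
| nablaC: "alpha1 A A' \<Longrightarrow> alpha1 (Nabla u v A) (Nabla u v A')"
| triC: "alpha1 A A' \<Longrightarrow> alpha1 (Tri u v A) (Tri u v A')"

inductive alpha_step :: "'p tseq \<Rightarrow> 'p tseq \<Rightarrow> bool" where
  bound: "k < length \<Gamma> \<Longrightarrow> alpha1 (\<Gamma> ! k) A' \<Longrightarrow> alpha_step (t, \<Gamma>) (t, \<Gamma>[k := A'])"
| rename: "inj f \<Longrightarrow> alpha_step (t, \<Gamma>) (image_mset (map_prod f f) t, map (ren f) \<Gamma>)"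

inductive eta_step :: "'p tseq \<Rightarrow> 'p tseq \<Rightarrow> bool" where
  up: "(\<exists>A\<in>set \<Gamma>. free_up i A) \<Longrightarrow> (\<exists>A\<in>set \<Gamma>. free_lo i A) \<Longrightarrow> j \<notin> seq_idxs (t, \<Gamma>) \<Longrightarrow>
     eta_step (t, \<Gamma>) (delta i j + t, map (subst_up j i) \<Gamma>)"
| lo: "(\<exists>A\<in>set \<Gamma>. free_up i A) \<Longrightarrow> (\<exists>A\<in>set \<Gamma>. free_lo i A) \<Longrightarrow> j \<notin> seq_idxs (t, \<Gamma>) \<Longrightarrow>
     eta_step (t, \<Gamma>) (delta j i + t, map (subst_lo j i) \<Gamma>)"

definition alpha_eta_equiv :: "'p tseq \<Rightarrow> 'p tseq \<Rightarrow> bool" (infix "\<equiv>\<^sub>\<alpha>\<^sub>\<eta>" 50) where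
  "S \<equiv>\<^sub>\<alpha>\<^sub>\<eta> S' \<longleftrightarrow> equivclp (\<lambda>X Y. alpha_step X Y \<or> eta_step X Y) S S'"

section \<open>Translations\<close>

definition xl :: "var \<Rightarrow> idx" where "xl x = 2 * x"
definition xr :: "var \<Rightarrow> idx" where "xr x = 2 * x + 1"

fun eta_long :: "('p \<Rightarrow> nat \<times> nat) \<Rightarrow> 'p fm \<Rightarrow> 'p tf" where
  "eta_long val (Atom p xs) =
     TLit p (map xl (take (fst (val p)) xs)) (map xr (drop (fst (val p)) xs))"
| "eta_long val (Tensor A B) = TTensor (eta_long val A) (eta_long val B)"
| "eta_long val (Par A B) = TPar (eta_long val A) (eta_long val B)"
| "eta_long val (All x A) = Nabla (xr x) (xl x) (eta_long val A)"
| "eta_long val (Ex x A) = Tri (xr x) (xl x) (eta_long val A)"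

definition eta_long_seq :: "('p \<Rightarrow> nat \<times> nat) \<Rightarrow> 'p fm list \<Rightarrow> 'p tseq" where
  "eta_long_seq val \<Gamma> =
     (\<Sum>x\<in>FV_seq val \<Gamma>. delta (xr x) (xl x), map (eta_long val) \<Gamma>)"

text \<open>The eta-reduced translation, defined up to alpha-equivalence: a relation
  between a formula and each of its admissible translations (any suitable, i.e.
  fresh and distinct, choice of the binder indices u, v).\<close>
inductive eta_red :: "('p \<Rightarrow> nat \<times> nat) \<Rightarrow> 'p fm \<Rightarrow> 'p tf \<Rightarrow> bool" for val where
  atom: "eta_red val (Atom p xs) (TLit p (take (fst (val p)) xs) (drop (fst (val p)) xs))"
| tensor: "eta_red val A A' \<Longrightarrow> eta_red val B B' \<Longrightarrow> eta_red val (Tensor A B) (TTensor A' B')"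
| par: "eta_red val A A' \<Longrightarrow> eta_red val B B' \<Longrightarrow> eta_red val (Par A B) (TPar A' B')"
| all: "eta_red val A A' \<Longrightarrow> u \<notin> idxs A' \<Longrightarrow> v \<notin> idxs A' \<Longrightarrow> u \<noteq> v \<Longrightarrow>
     eta_red val (All x A) (Nabla u v (subst_lo u x (subst_up v x A')))"
| ex: "eta_red val A A' \<Longrightarrow> u \<notin> idxs A' \<Longrightarrow> v \<notin> idxs A' \<Longrightarrow> u \<noteq> v \<Longrightarrow>
     eta_red val (Ex x A) (Tri u v (subst_lo u x (subst_up v x A')))"

definition eta_red_seq :: "('p \<Rightarrow> nat \<times> nat) \<Rightarrow> 'p fm list \<Rightarrow> 'p tseq \<Rightarrow> bool" where
  "eta_red_seq val \<Gamma> S \<longleftrightarrow> (\<exists>\<Gamma>'. list_all2 (eta_red val) \<Gamma> \<Gamma>' \<and> S = ({#}, \<Gamma>'))"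

end

theory Submission
  imports Defs
begin

text \<open>
  Both translations are instances of one relation \<open>transl val up lo A T\<close>: a free left (right)
  occurrence of a variable \<open>y\<close> becomes the upper index \<open>up y\<close> (lower index \<open>lo y\<close>), and each
  quantifier receives a pair of binder indices that captures no free index. Two translations of the
  same formula under the same environment are \<open>\<alpha>\<close>-equivalent: by induction on the formula,
  renaming the binders of both to a common fresh pair. The \<open>\<eta>\<close>-reduced translation is the case
  \<open>up = lo = id\<close>; renaming every index \<open>i\<close> to \<open>xr i\<close> turns it into the case
  \<open>up = lo = xr\<close>. In a well-formed sequent each free variable \<open>x\<close> has a free left and a free
  right occurrence, so an \<open>\<eta>\<close>-step may replace the upper index \<open>xr x\<close> by the fresh \<open>xl x\<close>
  at the price of the factor \<open>delta (xr x) (xl x)\<close>. Doing this for all free variables reaches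
  the environment \<open>up = xl, lo = xr\<close> of the \<open>\<eta>\<close>-long translation, together with its
  term \<open>\<pi>(\<Gamma>)\<close>.
\<close>

lemma equivclp_map:
  assumes "equivclp r a b" and "\<And>x y. r x y \<Longrightarrow> s (f x) (f y)"
  shows "equivclp s (f a) (f b)"
  using assms(1)
proof (induction rule: equivclp_induct)
  case (step y z)
  then show ?case using assms(2) by (meson equivclp_into_equivclp)
qed simp

section \<open>Uniform quantifiers and binders\<close>

definition quant :: "bool \<Rightarrow> var \<Rightarrow> 'p fm \<Rightarrow> 'p fm" where
  "quant b x A = (if b then All x A else Ex x A)"

definition tbinder :: "bool \<Rightarrow> idx \<Rightarrow> idx \<Rightarrow> 'p tf \<Rightarrow> 'p tf" where
  "tbinder b u v A = (if b then Nabla u v A else Tri u v A)"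

lemma quant_eq_iff [simp]: "quant b x A = quant b' x' A' \<longleftrightarrow> b = b' \<and> x = x' \<and> A = A'"
  by (simp add: quant_def)

lemma quant_neq [simp]:
  "quant b x A \<noteq> Atom p xs" "quant b x A \<noteq> Tensor B C" "quant b x A \<noteq> Par B C"
  "Atom p xs \<noteq> quant b x A" "Tensor B C \<noteq> quant b x A" "Par B C \<noteq> quant b x A"
  by (simp_all add: quant_def)

lemma fm_quant_induct [case_names Atom Tensor Par quant]:
  assumes "\<And>p xs. P (Atom p xs)"
    and "\<And>A B. P A \<Longrightarrow> P B \<Longrightarrow> P (Tensor A B)"
    and "\<And>A B. P A \<Longrightarrow> P B \<Longrightarrow> P (Par A B)"
    and "\<And>b x A. P A \<Longrightarrow> P (quant b x A)"
  shows "P A"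
  using assms by (induction A) (metis quant_def)+

lemma eta_long_quant [simp]:
  "eta_long val (quant b x A) = tbinder b (xr x) (xl x) (eta_long val A)"
  by (simp add: quant_def tbinder_def)

lemma lfree_quant [simp]: "lfree val y (quant b x A) = (if x = y then 0 else lfree val y A)"
  by (simp add: quant_def)

lemma rfree_quant [simp]: "rfree val y (quant b x A) = (if x = y then 0 else rfree val y A)"
  by (simp add: quant_def)

lemma idxs_tbinder [simp]: "idxs (tbinder b u v A) = {u, v} \<union> idxs A"
  by (simp add: tbinder_def)

lemma subst_up_tbinder [simp]:
  "subst_up j i (tbinder b u v A) = (if i = v then tbinder b u v A else tbinder b u v (subst_up j i A))"
  by (simp add: tbinder_def)

lemma subst_lo_tbinder [simp]:
  "subst_lo j i (tbinder b u v A) = (if i = u then tbinder b u v A else tbinder b u v (subst_lo j i A))"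
  by (simp add: tbinder_def)

lemma free_up_tbinder [simp]: "free_up i (tbinder b u v A) \<longleftrightarrow> i \<noteq> v \<and> free_up i A"
  by (simp add: tbinder_def)

lemma free_lo_tbinder [simp]: "free_lo i (tbinder b u v A) \<longleftrightarrow> i \<noteq> u \<and> free_lo i A"
  by (simp add: tbinder_def)

lemma ren_tbinder [simp]: "ren f (tbinder b u v A) = tbinder b (f u) (f v) (ren f A)"
  by (simp add: tbinder_def)

lemma alpha1_tbinder:
  "u' \<notin> idxs A \<Longrightarrow> v' \<notin> idxs A \<Longrightarrow> u' \<noteq> v' \<Longrightarrow>
    alpha1 (tbinder b u v A) (tbinder b u' v' (subst_lo u' u (subst_up v' v A)))"
  by (simp add: tbinder_def alpha1.nabla alpha1.tri)

lemma alpha1_tbinder_cong: "alpha1 A A' \<Longrightarrow> alpha1 (tbinder b u v A) (tbinder b u v A')"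
  by (simp add: tbinder_def alpha1.nablaC alpha1.triC)

section \<open>Free variables and indices\<close>

definition lfv :: "('p \<Rightarrow> nat \<times> nat) \<Rightarrow> 'p fm \<Rightarrow> var set" where
  "lfv val A = {y. 0 < lfree val y A}"

definition rfv :: "('p \<Rightarrow> nat \<times> nat) \<Rightarrow> 'p fm \<Rightarrow> var set" where
  "rfv val A = {y. 0 < rfree val y A}"

lemma lfv_simps [simp]:
  "lfv val (Atom p xs) = set (take (fst (val p)) xs)"
  "lfv val (Tensor A B) = lfv val A \<union> lfv val B"
  "lfv val (Par A B) = lfv val A \<union> lfv val B"
  "lfv val (quant b x A) = lfv val A - {x}"
  by (auto simp: lfv_def in_multiset_in_set)

lemma rfv_simps [simp]:
  "rfv val (Atom p xs) = set (drop (fst (val p)) xs)"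
  "rfv val (Tensor A B) = rfv val A \<union> rfv val B"
  "rfv val (Par A B) = rfv val A \<union> rfv val B"
  "rfv val (quant b x A) = rfv val A - {x}"
  by (auto simp: rfv_def in_multiset_in_set)

lemma finite_lfv: "finite (lfv val A)"
  by (induction A rule: fm_quant_induct) simp_all

lemma finite_rfv: "finite (rfv val A)"
  by (induction A rule: fm_quant_induct) simp_all

lemma sum_list_map_pos_iff: "0 < sum_list (map (f :: 'a \<Rightarrow> nat) xs) \<longleftrightarrow> (\<exists>a\<in>set xs. 0 < f a)"
  by (induction xs) auto

lemma FV_seq_eq: "FV_seq val \<Gamma> = (\<Union>A\<in>set \<Gamma>. lfv val A \<union> rfv val A)"
  by (auto simp: FV_seq_def lfree_seq_def rfree_seq_def lfv_def rfv_def sum_list_map_pos_iff)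

lemma finite_FV_seq: "finite (FV_seq val \<Gamma>)"
  by (simp add: FV_seq_eq finite_lfv finite_rfv)

lemma ling_wf_free_var_occurs:
  assumes "ling_wf val \<Gamma>" and "x \<in> FV_seq val \<Gamma>"
  shows "\<exists>A\<in>set \<Gamma>. x \<in> lfv val A" and "\<exists>A\<in>set \<Gamma>. x \<in> rfv val A"
proof -
  have "0 < lfree_seq val x \<Gamma>" and "0 < rfree_seq val x \<Gamma>"
    using assms by (auto simp: ling_wf_def)
  then show "\<exists>A\<in>set \<Gamma>. x \<in> lfv val A" and "\<exists>A\<in>set \<Gamma>. x \<in> rfv val A"
    by (auto simp: lfree_seq_def rfree_seq_def lfv_def rfv_def sum_list_map_pos_iff)
qed

lemma finite_idxs: "finite (idxs T)"
  by (induction T) auto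

lemma idxs_subst_up: "idxs (subst_up j i T) \<subseteq> insert j (idxs T)"
  by (induction T) auto

lemma idxs_ren: "idxs (ren f T) = f ` idxs T"
  by (induction T) auto

lemma free_up_idxs: "free_up i T \<Longrightarrow> i \<in> idxs T"
  by (induction T) auto

lemma free_lo_idxs: "free_lo i T \<Longrightarrow> i \<in> idxs T"
  by (induction T) auto

section \<open>Translations relative to an environment\<close>

definition rename_idx :: "idx \<Rightarrow> idx \<Rightarrow> idx \<Rightarrow> idx" where
  "rename_idx j i a = (if a = i then j else a)"

inductive transl :: "('p \<Rightarrow> nat \<times> nat) \<Rightarrow> (var \<Rightarrow> idx) \<Rightarrow> (var \<Rightarrow> idx) \<Rightarrow> 'p fm \<Rightarrow> 'p tf \<Rightarrow> bool"
  for val where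
  atom: "transl val up lo (Atom p xs)
     (TLit p (map up (take (fst (val p)) xs)) (map lo (drop (fst (val p)) xs)))"
| tensor: "transl val up lo A A' \<Longrightarrow> transl val up lo B B' \<Longrightarrow>
     transl val up lo (Tensor A B) (TTensor A' B')"
| par: "transl val up lo A A' \<Longrightarrow> transl val up lo B B' \<Longrightarrow>
     transl val up lo (Par A B) (TPar A' B')"
| quant: "transl val (up(x := v)) (lo(x := u)) A B \<Longrightarrow>
     v \<notin> up ` (lfv val A - {x}) \<Longrightarrow> u \<notin> lo ` (rfv val A - {x}) \<Longrightarrow>
     transl val up lo (quant b x A) (tbinder b u v B)"

inductive_cases transl_AtomE: "transl val up lo (Atom p xs) T"
inductive_cases transl_TensorE: "transl val up lo (Tensor A B) T"
inductive_cases transl_ParE: "transl val up lo (Par A B) T"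
inductive_cases transl_quantE: "transl val up lo (quant b x A) T"

lemma transl_cong:
  assumes "transl val up lo A T"
    and "\<And>y. y \<in> lfv val A \<Longrightarrow> up' y = up y" and "\<And>y. y \<in> rfv val A \<Longrightarrow> lo' y = lo y"
  shows "transl val up' lo' A T"
  using assms
proof (induction arbitrary: up' lo' rule: transl.induct)
  case (atom up lo p xs)
  then show ?case by (metis lfv_simps(1) rfv_simps(1) map_cong transl.atom)
next
  case (quant up x v lo u A B b)
  have "transl val (up'(x := v)) (lo'(x := u)) A B"
    using quant.prems by (intro quant.IH) auto
  moreover have "up' ` (lfv val A - {x}) = up ` (lfv val A - {x})"
    and "lo' ` (rfv val A - {x}) = lo ` (rfv val A - {x})"
    using quant.prems by (auto intro: image_cong)
  ultimately show ?case using quant.hyps(2,3) by (metis transl.quant)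
qed (auto intro: transl.intros)

lemma transl_subst_up:
  assumes "transl val up lo A T" and "j \<notin> idxs T"
  shows "transl val (rename_idx j i \<circ> up) lo A (subst_up j i T)"
  using assms
proof (induction rule: transl.induct)
  case (atom up lo p xs)
  then show ?case using transl.atom[of val "rename_idx j i \<circ> up"]
    by (simp add: rename_idx_def comp_def)
next
  case (quant up x v lo u A B b)
  have v_fixed: "rename_idx j i (up y) \<noteq> v" if "y \<in> lfv val A - {x}" for y
    using quant.hyps(2) quant.prems that by (auto simp: rename_idx_def)
  show ?case
  proof (cases "i = v")
    case True
    have "transl val ((rename_idx j i \<circ> up)(x := v)) (lo(x := u)) A B"
      using quant.hyps(1) by (rule transl_cong) (use quant.hyps(2) True in \<open>auto simp: rename_idx_def\<close>)
    moreover have "v \<notin> (rename_idx j i \<circ> up) ` (lfv val A - {x})"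
      using v_fixed by auto
    moreover have "subst_up j i (tbinder b u v B) = tbinder b u v B"
      using True by simp
    ultimately show ?thesis
      using quant.hyps(3) by (metis transl.quant)
  next
    case False
    then have upd: "(rename_idx j i \<circ> up)(x := v) = rename_idx j i \<circ> up(x := v)"
      by (auto simp: rename_idx_def)
    have "transl val (rename_idx j i \<circ> up(x := v)) (lo(x := u)) A (subst_up j i B)"
      by (rule quant.IH) (use quant.prems in simp)
    then have "transl val ((rename_idx j i \<circ> up)(x := v)) (lo(x := u)) A (subst_up j i B)"
      unfolding upd .
    moreover have "v \<notin> (rename_idx j i \<circ> up) ` (lfv val A - {x})"
      using v_fixed by auto
    moreover have "subst_up j i (tbinder b u v B) = tbinder b u v (subst_up j i B)"
      using False by simp
    ultimately show ?thesis
      using quant.hyps(3) by (metis transl.quant)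
  qed
qed (auto intro: transl.intros)

lemma transl_subst_lo:
  assumes "transl val up lo A T" and "j \<notin> idxs T"
  shows "transl val up (rename_idx j i \<circ> lo) A (subst_lo j i T)"
  using assms
proof (induction rule: transl.induct)
  case (atom up lo p xs)
  then show ?case using transl.atom[of val up "rename_idx j i \<circ> lo"]
    by (simp add: rename_idx_def comp_def)
next
  case (quant up x v lo u A B b)
  have u_fixed: "rename_idx j i (lo y) \<noteq> u" if "y \<in> rfv val A - {x}" for y
    using quant.hyps(3) quant.prems that by (auto simp: rename_idx_def)
  show ?case
  proof (cases "i = u")
    case True
    have "transl val (up(x := v)) ((rename_idx j i \<circ> lo)(x := u)) A B"
      using quant.hyps(1) by (rule transl_cong) (use quant.hyps(3) True in \<open>auto simp: rename_idx_def\<close>)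
    moreover have "u \<notin> (rename_idx j i \<circ> lo) ` (rfv val A - {x})"
      using u_fixed by auto
    moreover have "subst_lo j i (tbinder b u v B) = tbinder b u v B"
      using True by simp
    ultimately show ?thesis
      using quant.hyps(2) by (metis transl.quant)
  next
    case False
    then have upd: "(rename_idx j i \<circ> lo)(x := u) = rename_idx j i \<circ> lo(x := u)"
      by (auto simp: rename_idx_def)
    have "transl val (up(x := v)) (rename_idx j i \<circ> lo(x := u)) A (subst_lo j i B)"
      by (rule quant.IH) (use quant.prems in simp)
    then have "transl val (up(x := v)) ((rename_idx j i \<circ> lo)(x := u)) A (subst_lo j i B)"
      unfolding upd .
    moreover have "u \<notin> (rename_idx j i \<circ> lo) ` (rfv val A - {x})"
      using u_fixed by auto
    moreover have "subst_lo j i (tbinder b u v B) = tbinder b u v (subst_lo j i B)"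
      using False by simp
    ultimately show ?thesis
      using quant.hyps(2) by (metis transl.quant)
  qed
qed (auto intro: transl.intros)

lemma transl_free:
  assumes "transl val up lo A T"
  shows "y \<in> lfv val A \<Longrightarrow> free_up (up y) T" and "y \<in> rfv val A \<Longrightarrow> free_lo (lo y) T"
  using assms
  by (induction arbitrary: y rule: transl.induct) (fastforce split: if_splits)+

lemma transl_ren:
  assumes "transl val up lo A T" and "inj f"
  shows "transl val (f \<circ> up) (f \<circ> lo) A (ren f T)"
  using assms
proof (induction rule: transl.induct)
  case (atom up lo p xs)
  then show ?case using transl.atom[of val "f \<circ> up" "f \<circ> lo"] by (simp only: ren.simps map_map)
next
  case (quant up x v lo u A B b)
  have "transl val ((f \<circ> up)(x := f v)) ((f \<circ> lo)(x := f u)) A (ren f B)"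
    using quant.IH[OF quant.prems] by (simp only: fun_upd_comp)
  moreover have "f v \<notin> (f \<circ> up) ` (lfv val A - {x})" "f u \<notin> (f \<circ> lo) ` (rfv val A - {x})"
    using quant by (auto simp: inj_eq)
  ultimately have "transl val (f \<circ> up) (f \<circ> lo) (quant b x A) (tbinder b (f u) (f v) (ren f B))"
    by (rule transl.quant)
  then show ?case by (simp only: ren_tbinder)
qed (auto intro: transl.intros)

lemma transl_rename_bound:
  assumes B: "transl val (up(x := v)) (lo(x := u)) A B"
    and v: "v \<notin> up ` (lfv val A - {x})" and u: "u \<notin> lo ` (rfv val A - {x})"
    and fresh: "u' \<notin> idxs B" "v' \<notin> idxs B" "u' \<noteq> v'"
  shows "transl val (up(x := v')) (lo(x := u')) A (subst_lo u' u (subst_up v' v B))"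
proof -
  have "transl val (rename_idx v' v \<circ> up(x := v)) (lo(x := u)) A (subst_up v' v B)"
    using B fresh(2) by (rule transl_subst_up)
  moreover have "u' \<notin> idxs (subst_up v' v B)"
    using idxs_subst_up fresh by blast
  ultimately have "transl val (rename_idx v' v \<circ> up(x := v)) (rename_idx u' u \<circ> lo(x := u)) A
      (subst_lo u' u (subst_up v' v B))"
    by (rule transl_subst_lo)
  then show ?thesis
    by (rule transl_cong) (use u v in \<open>auto simp: rename_idx_def\<close>)
qed

lemma eta_red_transl:
  assumes "eta_red val A A'"
  shows "transl val id id A A'"
proof -
  have quant_case: "transl val id id (quant b x A) (tbinder b u v (subst_lo u x (subst_up v x A')))"
    if A': "transl val id id A A'" and fresh: "u \<notin> idxs A'" "v \<notin> idxs A'" "u \<noteq> v"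
    for b x A A' u v
  proof (rule transl.quant)
    show "transl val (id(x := v)) (id(x := u)) A (subst_lo u x (subst_up v x A'))"
      using transl_rename_bound[of val id x x id x A A' u v] A' fresh by (simp add: fun_upd_idem)
    show "v \<notin> id ` (lfv val A - {x})" "u \<notin> id ` (rfv val A - {x})"
      using transl_free[OF A'] free_up_idxs free_lo_idxs fresh by fastforce+
  qed
  from assms show ?thesis
  proof (induction rule: eta_red.induct)
    case (atom p xs)
    then show ?case using transl.atom[of val id id p xs] by (simp only: list.map_id)
  next
    case (all A A' u v x)
    then show ?case using quant_case[where b = True, unfolded quant_def tbinder_def if_True] by blast
  next
    case (ex A A' u v x)
    then show ?case using quant_case[where b = False, unfolded quant_def tbinder_def if_False] by blast
  qed (auto intro: transl.intros)
qed

lemma xl_neq_xr [simp]: "xl a \<noteq> xr b"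
  unfolding xl_def xr_def by presburger

lemma inj_xl: "inj xl"
  by (simp add: inj_def xl_def)

lemma inj_xr: "inj xr"
  by (simp add: inj_def xr_def)

lemma eta_long_transl: "transl val xl xr A (eta_long val A)"
proof (induction A rule: fm_quant_induct)
  case (Atom p xs)
  then show ?case using transl.atom[of val xl xr p xs] by simp
next
  case (quant b x A)
  have "xl x \<notin> xl ` (lfv val A - {x})" "xr x \<notin> xr ` (rfv val A - {x})"
    by (auto simp: inj_xl inj_xr inj_image_mem_iff)
  with quant show ?case by (auto intro: transl.quant)
qed (auto intro: transl.intros)

section \<open>Uniqueness up to \<open>\<alpha>\<close>-equivalence\<close>

lemma obtain_fresh_pair:
  fixes S :: "nat set"
  assumes "finite S"
  obtains u v where "u \<notin> S" "v \<notin> S" "u \<noteq> v"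
proof -
  obtain u where "u \<notin> S"
    using assms ex_new_if_finite[OF infinite_UNIV_nat] by blast
  moreover obtain v where "v \<notin> insert u S"
    using assms ex_new_if_finite[OF infinite_UNIV_nat] by (metis finite_insert)
  ultimately show thesis
    using that by blast
qed

abbreviation alpha_equiv :: "'p tf \<Rightarrow> 'p tf \<Rightarrow> bool" where
  "alpha_equiv \<equiv> equivclp alpha1"

lemma alpha_equiv_TTensor:
  assumes "alpha_equiv A A'" and "alpha_equiv B B'"
  shows "alpha_equiv (TTensor A B) (TTensor A' B')"
proof -
  have "alpha_equiv (TTensor A B) (TTensor A' B)"
    using assms(1) by (rule equivclp_map[where f = "\<lambda>X. TTensor X B"]) (rule alpha1.tensorL)
  also have "alpha_equiv \<dots> (TTensor A' B')"
    using assms(2) by (rule equivclp_map[where f = "TTensor A'"]) (rule alpha1.tensorR)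
  finally show ?thesis .
qed

lemma alpha_equiv_TPar:
  assumes "alpha_equiv A A'" and "alpha_equiv B B'"
  shows "alpha_equiv (TPar A B) (TPar A' B')"
proof -
  have "alpha_equiv (TPar A B) (TPar A' B)"
    using assms(1) by (rule equivclp_map[where f = "\<lambda>X. TPar X B"]) (rule alpha1.parL)
  also have "alpha_equiv \<dots> (TPar A' B')"
    using assms(2) by (rule equivclp_map[where f = "TPar A'"]) (rule alpha1.parR)
  finally show ?thesis .
qed

lemma alpha_equiv_tbinder: "alpha_equiv A A' \<Longrightarrow> alpha_equiv (tbinder b u v A) (tbinder b u v A')"
  by (erule equivclp_map[where f = "tbinder b u v"]) (rule alpha1_tbinder_cong)

lemma transl_alpha_equiv:
  assumes "transl val up lo A T1" and "transl val up lo A T2"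
  shows "alpha_equiv T1 T2"
  using assms
proof (induction A arbitrary: up lo T1 T2 rule: fm_quant_induct)
  case (Atom p xs)
  then show ?case by (auto elim!: transl_AtomE)
next
  case (Tensor A B)
  then show ?case by (blast elim!: transl_TensorE intro: alpha_equiv_TTensor)
next
  case (Par A B)
  then show ?case by (blast elim!: transl_ParE intro: alpha_equiv_TPar)
next
  case (quant b x A)
  from quant.prems(1) obtain u1 v1 B1 where T1: "T1 = tbinder b u1 v1 B1"
    and B1: "transl val (up(x := v1)) (lo(x := u1)) A B1"
      "v1 \<notin> up ` (lfv val A - {x})" "u1 \<notin> lo ` (rfv val A - {x})"
    by (rule transl_quantE)
  from quant.prems(2) obtain u2 v2 B2 where T2: "T2 = tbinder b u2 v2 B2"
    and B2: "transl val (up(x := v2)) (lo(x := u2)) A B2"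
      "v2 \<notin> up ` (lfv val A - {x})" "u2 \<notin> lo ` (rfv val A - {x})"
    by (rule transl_quantE)
  obtain u' v' where fresh: "u' \<notin> idxs B1 \<union> idxs B2" "v' \<notin> idxs B1 \<union> idxs B2" "u' \<noteq> v'"
    using finite_idxs by (metis finite_UnI obtain_fresh_pair)
  define C1 where "C1 = subst_lo u' u1 (subst_up v' v1 B1)"
  define C2 where "C2 = subst_lo u' u2 (subst_up v' v2 B2)"
  have "transl val (up(x := v')) (lo(x := u')) A C1"
    unfolding C1_def using B1 fresh by (intro transl_rename_bound) auto
  moreover have "transl val (up(x := v')) (lo(x := u')) A C2"
    unfolding C2_def using B2 fresh by (intro transl_rename_bound) auto
  ultimately have "alpha_equiv C1 C2"
    by (rule quant.IH)
  have "alpha_equiv T1 (tbinder b u' v' C1)"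
    unfolding T1 C1_def using fresh by (intro r_into_equivclp alpha1_tbinder) auto
  also have "alpha_equiv \<dots> (tbinder b u' v' C2)"
    using \<open>alpha_equiv C1 C2\<close> by (rule alpha_equiv_tbinder)
  also have "alpha_equiv \<dots> T2"
    unfolding T2 C2_def using fresh by (intro converse_r_into_equivclp alpha1_tbinder) auto
  finally show ?case .
qed

section \<open>Sequents\<close>

lemma alpha_eta_equiv_sym: "S \<equiv>\<^sub>\<alpha>\<^sub>\<eta> S' \<Longrightarrow> S' \<equiv>\<^sub>\<alpha>\<^sub>\<eta> S"
  unfolding alpha_eta_equiv_def by (rule equivclp_sym)

lemma alpha_eta_equiv_trans [trans]:
  "S1 \<equiv>\<^sub>\<alpha>\<^sub>\<eta> S2 \<Longrightarrow> S2 \<equiv>\<^sub>\<alpha>\<^sub>\<eta> S3 \<Longrightarrow> S1 \<equiv>\<^sub>\<alpha>\<^sub>\<eta> S3"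
  unfolding alpha_eta_equiv_def by (rule equivclp_trans)

lemma alpha_step_imp_alpha_eta_equiv: "alpha_step S S' \<Longrightarrow> S \<equiv>\<^sub>\<alpha>\<^sub>\<eta> S'"
  unfolding alpha_eta_equiv_def by blast

lemma eta_step_imp_alpha_eta_equiv: "eta_step S S' \<Longrightarrow> S \<equiv>\<^sub>\<alpha>\<^sub>\<eta> S'"
  unfolding alpha_eta_equiv_def by blast

lemma alpha_eta_equiv_list_update:
  assumes "alpha_equiv A B" and "k < length \<Gamma>"
  shows "(t, \<Gamma>[k := A]) \<equiv>\<^sub>\<alpha>\<^sub>\<eta> (t, \<Gamma>[k := B])"
  unfolding alpha_eta_equiv_def using assms(1)
proof (rule equivclp_map[where f = "\<lambda>A. (t, \<Gamma>[k := A])"])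
  fix A' B' :: "'a tf"
  assume "alpha1 A' B'"
  then have "alpha_step (t, \<Gamma>[k := A']) (t, (\<Gamma>[k := A'])[k := B'])"
    using assms(2) by (intro alpha_step.bound) auto
  then show "alpha_step (t, \<Gamma>[k := A']) (t, \<Gamma>[k := B']) \<or> eta_step (t, \<Gamma>[k := A']) (t, \<Gamma>[k := B'])"
    by simp
qed

lemma alpha_eta_equiv_if_list_all2_alpha_equiv:
  assumes "list_all2 alpha_equiv \<Gamma>1 \<Gamma>2"
  shows "(t, \<Gamma>1) \<equiv>\<^sub>\<alpha>\<^sub>\<eta> (t, \<Gamma>2)"
proof -
  have "(t, P @ \<Gamma>1) \<equiv>\<^sub>\<alpha>\<^sub>\<eta> (t, P @ \<Gamma>2)" for P
    using assms
  proof (induction arbitrary: P rule: list_all2_induct)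
    case Nil
    then show ?case by (simp add: alpha_eta_equiv_def)
  next
    case (Cons A \<Gamma>1 B \<Gamma>2)
    have "(t, (P @ A # \<Gamma>1)[length P := A]) \<equiv>\<^sub>\<alpha>\<^sub>\<eta> (t, (P @ A # \<Gamma>1)[length P := B])"
      using Cons.hyps(1) by (rule alpha_eta_equiv_list_update) simp
    then have "(t, P @ A # \<Gamma>1) \<equiv>\<^sub>\<alpha>\<^sub>\<eta> (t, (P @ [B]) @ \<Gamma>1)"
      by simp
    also have "\<dots> \<equiv>\<^sub>\<alpha>\<^sub>\<eta> (t, (P @ [B]) @ \<Gamma>2)"
      by (rule Cons.IH)
    finally show ?case by simp
  qed
  from this[of "[]"] show ?thesis by simp
qed

lemma list_all2_ex_in_set2: "list_all2 P xs ys \<Longrightarrow> x \<in> set xs \<Longrightarrow> \<exists>y\<in>set ys. P x y"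
  by (induction rule: list_all2_induct) auto

lemma eta_step_transl:
  assumes \<Delta>: "list_all2 (transl val up lo) \<Gamma> \<Delta>"
    and occurs: "\<exists>A\<in>set \<Gamma>. x \<in> lfv val A" "\<exists>A\<in>set \<Gamma>. x \<in> rfv val A"
    and "up x = lo x" and fresh: "j \<notin> seq_idxs (t, \<Delta>)"
  shows "eta_step (t, \<Delta>) (delta (lo x) j + t, map (subst_up j (lo x)) \<Delta>)"
    and "list_all2 (transl val (rename_idx j (lo x) \<circ> up) lo) \<Gamma> (map (subst_up j (lo x)) \<Delta>)"
proof -
  have "\<exists>T\<in>set \<Delta>. free_up (lo x) T"
    using occurs(1) \<open>up x = lo x\<close> list_all2_ex_in_set2[OF \<Delta>] transl_free(1) by metis
  moreover have "\<exists>T\<in>set \<Delta>. free_lo (lo x) T"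
    using occurs(2) list_all2_ex_in_set2[OF \<Delta>] transl_free(2) by metis
  ultimately show "eta_step (t, \<Delta>) (delta (lo x) j + t, map (subst_up j (lo x)) \<Delta>)"
    using fresh by (rule eta_step.up)
  have fresh_T: "j \<notin> idxs T" if "T \<in> set \<Delta>" for T
    using fresh that by (auto simp: seq_idxs_def)
  show "list_all2 (transl val (rename_idx j (lo x) \<circ> up) lo) \<Gamma> (map (subst_up j (lo x)) \<Delta>)"
    unfolding list_all2_map2 using \<Delta>
    by (rule list.rel_mono_strong) (metis transl_subst_up fresh_T)
qed

definition xl_on :: "var set \<Rightarrow> var \<Rightarrow> idx" where
  "xl_on F y = (if y \<in> F then xl y else xr y)"

lemma set_mset_deltas:
  "finite F \<Longrightarrow> set_mset (\<Sum>x\<in>F. delta (xr x) (xl x)) = (\<lambda>x. (xr x, xl x)) ` F"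
  by (auto simp: set_mset_sum delta_def)

lemma eta_expand_free_vars:
  assumes occurs: "\<And>x. x \<in> FV_seq val \<Gamma> \<Longrightarrow> \<exists>A\<in>set \<Gamma>. x \<in> lfv val A"
      "\<And>x. x \<in> FV_seq val \<Gamma> \<Longrightarrow> \<exists>A\<in>set \<Gamma>. x \<in> rfv val A"
    and \<Delta>: "list_all2 (transl val xr xr) \<Gamma> \<Delta>"
    and xl_fresh: "\<And>T z. T \<in> set \<Delta> \<Longrightarrow> xl z \<notin> idxs T"
    and "finite F" and "F \<subseteq> FV_seq val \<Gamma>"
  shows "\<exists>\<Delta>F. list_all2 (transl val (xl_on F) xr) \<Gamma> \<Delta>F \<and>
    (\<forall>T\<in>set \<Delta>F. \<forall>z. z \<notin> F \<longrightarrow> xl z \<notin> idxs T) \<and>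
    ({#}, \<Delta>) \<equiv>\<^sub>\<alpha>\<^sub>\<eta> (\<Sum>x\<in>F. delta (xr x) (xl x), \<Delta>F)"
  using \<open>finite F\<close> \<open>F \<subseteq> FV_seq val \<Gamma>\<close>
proof (induction F rule: finite_induct)
  case empty
  have "xl_on {} = xr"
    by (simp add: xl_on_def fun_eq_iff)
  then show ?case
    using \<Delta> xl_fresh by (auto simp: alpha_eta_equiv_def)
next
  case (insert x F)
  then obtain \<Delta>F where \<Delta>F: "list_all2 (transl val (xl_on F) xr) \<Gamma> \<Delta>F"
    and xl_fresh_F: "\<forall>T\<in>set \<Delta>F. \<forall>z. z \<notin> F \<longrightarrow> xl z \<notin> idxs T"
    and equiv: "({#}, \<Delta>) \<equiv>\<^sub>\<alpha>\<^sub>\<eta> (\<Sum>x\<in>F. delta (xr x) (xl x), \<Delta>F)"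
    by auto
  let ?\<Delta>F' = "map (subst_up (xl x) (xr x)) \<Delta>F"
  have occ: "\<exists>A\<in>set \<Gamma>. x \<in> lfv val A" "\<exists>A\<in>set \<Gamma>. x \<in> rfv val A"
    using occurs insert.prems by auto
  have up_x: "xl_on F x = xr x"
    using insert.hyps(2) by (simp add: xl_on_def)
  have fresh: "xl x \<notin> seq_idxs (\<Sum>x\<in>F. delta (xr x) (xl x), \<Delta>F)"
    using insert.hyps xl_fresh_F by (auto simp: seq_idxs_def set_mset_deltas inj_xl inj_eq)
  note eta = eta_step_transl[OF \<Delta>F occ up_x fresh]
  have upd: "rename_idx (xl x) (xr x) \<circ> xl_on F = xl_on (insert x F)"
    using insert.hyps(2) by (auto simp: fun_eq_iff rename_idx_def xl_on_def inj_xr inj_eq)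
  have sum_insert: "(\<Sum>x\<in>insert x F. delta (xr x) (xl x)) = delta (xr x) (xl x) + (\<Sum>x\<in>F. delta (xr x) (xl x))"
    using insert.hyps by (rule sum.insert)
  have "list_all2 (transl val (xl_on (insert x F)) xr) \<Gamma> ?\<Delta>F'"
    using eta(2) unfolding upd .
  moreover have "\<forall>T\<in>set ?\<Delta>F'. \<forall>z. z \<notin> insert x F \<longrightarrow> xl z \<notin> idxs T"
    using xl_fresh_F idxs_subst_up by (fastforce simp: inj_xl inj_eq)
  moreover have "({#}, \<Delta>) \<equiv>\<^sub>\<alpha>\<^sub>\<eta> (\<Sum>x\<in>insert x F. delta (xr x) (xl x), ?\<Delta>F')"
    unfolding sum_insert using equiv eta_step_imp_alpha_eta_equiv[OF eta(1)] by (rule alpha_eta_equiv_trans)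
  ultimately show ?case
    by blast
qed

lemma alpha_eta_equiv_eta_long:
  assumes "list_all2 (transl val up lo) \<Gamma> \<Delta>"
    and "\<And>y. y \<in> FV_seq val \<Gamma> \<Longrightarrow> up y = xl y" and "\<And>y. y \<in> FV_seq val \<Gamma> \<Longrightarrow> lo y = xr y"
  shows "(t, \<Delta>) \<equiv>\<^sub>\<alpha>\<^sub>\<eta> (t, map (eta_long val) \<Gamma>)"
proof (rule alpha_eta_equiv_if_list_all2_alpha_equiv)
  have elem: "alpha_equiv T (eta_long val A)" if A: "A \<in> set \<Gamma>" and T: "transl val up lo A T" for A T
  proof (rule transl_alpha_equiv)
    have FV: "lfv val A \<subseteq> FV_seq val \<Gamma>" "rfv val A \<subseteq> FV_seq val \<Gamma>"
      using A by (auto simp: FV_seq_eq)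
    show "transl val xl xr A T"
    proof (rule transl_cong[OF T])
      show "xl y = up y" if "y \<in> lfv val A" for y
        using that FV(1) assms(2) by (metis subsetD)
      show "xr y = lo y" if "y \<in> rfv val A" for y
        using that FV(2) assms(3) by (metis subsetD)
    qed
  qed (rule eta_long_transl)
  have "list_all2 (\<lambda>A T. alpha_equiv T (eta_long val A)) \<Gamma> \<Delta>"
    using assms(1) by (rule list.rel_mono_strong) (rule elem)
  then show "list_all2 alpha_equiv \<Delta> (map (eta_long val) \<Gamma>)"
    by (auto simp: list_all2_conv_all_nth)
qed

lemma eta_red_list_transl_xr:
  assumes "list_all2 (eta_red val) \<Gamma> \<Gamma>'"
  shows "list_all2 (transl val xr xr) \<Gamma> (map (ren xr) \<Gamma>')"
  unfolding list_all2_map2 using assms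
  by (rule list.rel_mono_strong) (metis eta_red_transl transl_ren inj_xr comp_id)

theorem proposition7p2:
  fixes val :: "'p \<Rightarrow> nat \<times> nat" and \<Gamma> :: "'p fm list" and S :: "'p tseq"
  assumes "ling_wf val \<Gamma>"
    and "eta_red_seq val \<Gamma> S"
  shows "eta_long_seq val \<Gamma> \<equiv>\<^sub>\<alpha>\<^sub>\<eta> S"
proof -
  from assms(2) obtain \<Gamma>' where red: "list_all2 (eta_red val) \<Gamma> \<Gamma>'" and S: "S = ({#}, \<Gamma>')"
    by (auto simp: eta_red_seq_def)
  define \<Delta> where "\<Delta> = map (ren xr) \<Gamma>'"
  have \<Delta>: "list_all2 (transl val xr xr) \<Gamma> \<Delta>"
    unfolding \<Delta>_def using red by (rule eta_red_list_transl_xr)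
  have xl_fresh: "xl z \<notin> idxs T" if "T \<in> set \<Delta>" for T z
    using that by (auto simp: \<Delta>_def idxs_ren)
  obtain \<Delta>F where \<Delta>F: "list_all2 (transl val (xl_on (FV_seq val \<Gamma>)) xr) \<Gamma> \<Delta>F"
    and expand: "({#}, \<Delta>) \<equiv>\<^sub>\<alpha>\<^sub>\<eta> (\<Sum>x\<in>FV_seq val \<Gamma>. delta (xr x) (xl x), \<Delta>F)"
    using eta_expand_free_vars[OF ling_wf_free_var_occurs[OF assms(1)] \<Delta> xl_fresh finite_FV_seq order_refl]
    by blast
  have "S \<equiv>\<^sub>\<alpha>\<^sub>\<eta> ({#}, \<Delta>)"
    unfolding S \<Delta>_def using alpha_step.rename[OF inj_xr, of "{#}" \<Gamma>']
    by (simp add: alpha_step_imp_alpha_eta_equiv)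
  also note expand
  also have "(\<Sum>x\<in>FV_seq val \<Gamma>. delta (xr x) (xl x), \<Delta>F) \<equiv>\<^sub>\<alpha>\<^sub>\<eta> eta_long_seq val \<Gamma>"
    unfolding eta_long_seq_def using \<Delta>F by (rule alpha_eta_equiv_eta_long) (simp_all add: xl_on_def)
  finally show ?thesis
    by (rule alpha_eta_equiv_sym)
qed

end
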